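(* Let $X$ be a continuum, let $n\geq 2$ be an integer, and let $f:X\to X$ be a map. Then $F_n(f)$ is $\mathbb{Z}$-transitive if and only if $f$ is weakly mixing.
   Context: A continuum is a nonempty compact connected metric space. $F_n(X)$ is the set of nonempty subsets of $X$ with at most $n$ points, with the Hausdorff metric topology, and $F_n(f)(A)=f(A)$. A map $g:Z\to Z$ is $\mathbb{Z}$-transitive if for any nonempty open $U,V\subseteq Z$ there is $k\in\mathbb{Z}$ with $g^k(U)\cap V\neq\emptyset$, where for $k<0$, $g^k(U)$ means $(g^{-k})^{-1}(U)$. $f$ is weakly mixing if for any nonempty open $U_1,U_2,V_1,V_2\subseteq X$ there is $k\in\mathbb{N}$ with $f^k(U_1)\cap V_1\neq\emptyset$ and $f^k(U_2)\cap V_2\neq\emptyset$. *)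

theory Defs
  imports "HOL-Analysis.Analysis"
begin

definition continuum :: "'a::metric_space set \<Rightarrow> bool" where
  "continuum X \<longleftrightarrow> X \<noteq> {} \<and> compact X \<and> connected X"

definition Fn :: "nat \<Rightarrow> 'a set \<Rightarrow> 'a set set" where
  "Fn n X = {A. A \<subseteq> X \<and> A \<noteq> {} \<and> finite A \<and> card A \<le> n}"

text \<open>Hausdorff distance (used on nonempty finite sets).\<close>
definition hausdorff_dist :: "'a::metric_space set \<Rightarrow> 'a set \<Rightarrow> real" where
  "hausdorff_dist A B = max (SUP a\<in>A. infdist a B) (SUP b\<in>B. infdist b A)"

definition Fn_open :: "nat \<Rightarrow> 'a::metric_space set \<Rightarrow> 'a set set \<Rightarrow> bool" where
  "Fn_open n X \<U> \<longleftrightarrow> \<U> \<subseteq> Fn n X \<and>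
     (\<forall>A\<in>\<U>. \<exists>e>0. \<forall>B\<in>Fn n X. hausdorff_dist A B < e \<longrightarrow> B \<in> \<U>)"

definition Fn_map :: "('a \<Rightarrow> 'a) \<Rightarrow> 'a set \<Rightarrow> 'a set" where
  "Fn_map f A = f ` A"

text \<open>Z-transitivity of g on a space Z given by its family of open sets.
  For k < 0, g^k(U) is the preimage (within Z) of U under g^(-k).\<close>
definition Z_transitive :: "('b set \<Rightarrow> bool) \<Rightarrow> 'b set \<Rightarrow> ('b \<Rightarrow> 'b) \<Rightarrow> bool" where
  "Z_transitive isopen Z g \<longleftrightarrow>
     (\<forall>U V. isopen U \<and> U \<noteq> {} \<and> isopen V \<and> V \<noteq> {} \<longrightarrow>
        (\<exists>k::int. (if k \<ge> 0 then (g ^^ nat k) ` U \<inter> V \<noteq> {}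
                   else {z\<in>Z. (g ^^ nat (-k)) z \<in> U} \<inter> V \<noteq> {})))"

definition weakly_mixing :: "'a::topological_space set \<Rightarrow> ('a \<Rightarrow> 'a) \<Rightarrow> bool" where
  "weakly_mixing X f \<longleftrightarrow>
     (\<forall>U1 U2 V1 V2. openin (top_of_set X) U1 \<and> U1 \<noteq> {} \<and> openin (top_of_set X) U2 \<and> U2 \<noteq> {}
        \<and> openin (top_of_set X) V1 \<and> V1 \<noteq> {} \<and> openin (top_of_set X) V2 \<and> V2 \<noteq> {} \<longrightarrow>
        (\<exists>k::nat. k \<ge> 1 \<and> (f ^^ k) ` U1 \<inter> V1 \<noteq> {} \<and> (f ^^ k) ` U2 \<inter> V2 \<noteq> {}))"

end

(*
  If f is weakly mixing, every finite product of copies of f is transitive. Given finite sets E and D,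
  pair their points off and take a common time k at which small balls around the points of E reach
  the balls around the partner points of D; the chosen points form a finite set near E whose k-th
  image is near D, so F_n(f) is even transitive.

  Conversely, Z-transitivity of F_n(f), applied to the finite sets inside A and the finite sets
  meeting both B and C, shows: for nonempty open A, B, C some iterate either moves A into both B
  and C, or moves both B and C into A. In a nondegenerate continuum, which is compact and has no
  isolated points, this forces f to be onto and then transitive with positive times. Writing
  N(U,V) for the set of times k with f^k(U) meeting V, transitivity lets one transpose: if N(U1,V1)
  meets N(U2,V2) then N(U1,U2) meets N(V1,V2). Applied to two disjoint open sets, this upgrades the
  two-alternative property to weak mixing.
*)

theory Submission
  imports Defs
begin

lemma hausdorff_dist_commute: "hausdorff_dist A B = hausdorff_dist B A"
  unfolding hausdorff_dist_def by (rule max.commute)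

lemma hausdorff_dist_lessE:
  fixes E D :: "'a::metric_space set"
  assumes "finite E" "D \<noteq> {}" "a \<in> E" "hausdorff_dist E D < r"
  obtains b where "b \<in> D" "dist a b < r"
proof -
  have "infdist a D \<le> (SUP a\<in>E. infdist a D)"
    using assms by (intro cSUP_upper) auto
  also have "\<dots> \<le> hausdorff_dist E D"
    unfolding hausdorff_dist_def by simp
  finally have "(INF b\<in>D. dist a b) < r"
    using assms by (simp add: infdist_notempty)
  then show thesis
    using that assms(2) by (subst (asm) cINF_less_iff) (auto intro: bdd_belowI[of _ 0])
qed

lemma hausdorff_dist_image_le:
  fixes g h :: "'i \<Rightarrow> 'a::metric_space"
  assumes "J \<noteq> {}" and "\<And>j. j \<in> J \<Longrightarrow> dist (g j) (h j) \<le> r"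
  shows "hausdorff_dist (g ` J) (h ` J) \<le> r"
  unfolding hausdorff_dist_def
proof (rule max.boundedI)
  show "(SUP a\<in>g ` J. infdist a (h ` J)) \<le> r"
    using assms by (auto intro!: cSUP_least infdist_le2)
  show "(SUP b\<in>h ` J. infdist b (g ` J)) \<le> r"
    using assms by (auto intro!: cSUP_least infdist_le2 simp: dist_commute)
qed

lemma image_in_Fn:
  assumes "finite J" "J \<noteq> {}" "card J \<le> n" "g ` J \<subseteq> X"
  shows "g ` J \<in> Fn n X"
  using assms card_image_le[of J g] by (auto simp: Fn_def)

lemma Fn_open_Int:
  assumes "Fn_open n X \<U>" "Fn_open n X \<V>"
  shows "Fn_open n X (\<U> \<inter> \<V>)"
  unfolding Fn_open_def
proof (intro conjI ballI)
  show "\<U> \<inter> \<V> \<subseteq> Fn n X"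
    using assms by (auto simp: Fn_open_def)
  fix A assume "A \<in> \<U> \<inter> \<V>"
  then obtain e1 e2 where "e1 > 0" "\<forall>B\<in>Fn n X. hausdorff_dist A B < e1 \<longrightarrow> B \<in> \<U>"
    and "e2 > 0" "\<forall>B\<in>Fn n X. hausdorff_dist A B < e2 \<longrightarrow> B \<in> \<V>"
    using assms unfolding Fn_open_def by blast
  then show "\<exists>e>0. \<forall>B\<in>Fn n X. hausdorff_dist A B < e \<longrightarrow> B \<in> \<U> \<inter> \<V>"
    by (intro exI[of _ "min e1 e2"]) auto
qed

lemma Fn_open_subsets:
  assumes "openin (top_of_set X) U"
  shows "Fn_open n X {E \<in> Fn n X. E \<subseteq> U}"
  unfolding Fn_open_def
proof (intro conjI ballI)
  fix E assume "E \<in> {E \<in> Fn n X. E \<subseteq> U}"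
  then have E: "finite E" "E \<noteq> {}" "E \<subseteq> U"
    by (auto simp: Fn_def)
  have "\<forall>e\<in>E. \<exists>\<epsilon>>0. \<forall>x\<in>X. dist x e < \<epsilon> \<longrightarrow> x \<in> U"
    using assms E(3) unfolding openin_euclidean_subtopology_iff by blast
  then obtain \<epsilon> where \<epsilon>: "\<And>e. e \<in> E \<Longrightarrow> \<epsilon> e > 0 \<and> (\<forall>x\<in>X. dist x e < \<epsilon> e \<longrightarrow> x \<in> U)"
    by metis
  define \<delta> where "\<delta> = Min (\<epsilon> ` E)"
  have "\<delta> > 0"
    using E \<epsilon> by (simp add: \<delta>_def)
  moreover have "B \<subseteq> U" if B: "B \<in> Fn n X" "hausdorff_dist E B < \<delta>" for B
  proof
    fix b assume "b \<in> B"
    moreover obtain a where "a \<in> E" "dist b a < \<delta>"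
      using hausdorff_dist_lessE[of B E b \<delta>] B \<open>b \<in> B\<close> E
      by (auto simp: Fn_def hausdorff_dist_commute)
    moreover have "\<delta> \<le> \<epsilon> a"
      using \<open>a \<in> E\<close> E by (simp add: \<delta>_def)
    ultimately show "b \<in> U"
      using \<epsilon> B(1) by (force simp: Fn_def)
  qed
  ultimately show "\<exists>e>0. \<forall>B\<in>Fn n X. hausdorff_dist E B < e \<longrightarrow> B \<in> {E \<in> Fn n X. E \<subseteq> U}"
    by blast
qed auto

lemma Fn_open_meets:
  assumes "openin (top_of_set X) U"
  shows "Fn_open n X {E \<in> Fn n X. E \<inter> U \<noteq> {}}"
  unfolding Fn_open_def
proof (intro conjI ballI)
  fix E assume "E \<in> {E \<in> Fn n X. E \<inter> U \<noteq> {}}"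
  then obtain u where u: "u \<in> E" "u \<in> U" and "finite E"
    by (auto simp: Fn_def)
  obtain \<epsilon> where "\<epsilon> > 0" and \<epsilon>: "\<And>x. x \<in> X \<Longrightarrow> dist x u < \<epsilon> \<Longrightarrow> x \<in> U"
    using assms u unfolding openin_euclidean_subtopology_iff by metis
  have "B \<inter> U \<noteq> {}" if B: "B \<in> Fn n X" "hausdorff_dist E B < \<epsilon>" for B
  proof -
    obtain b where "b \<in> B" "dist u b < \<epsilon>"
      using hausdorff_dist_lessE[OF \<open>finite E\<close> _ u(1) B(2)] B(1) by (auto simp: Fn_def)
    then show ?thesis
      using \<epsilon>[of b] B(1) by (auto simp: Fn_def dist_commute)
  qed
  then show "\<exists>e>0. \<forall>B\<in>Fn n X. hausdorff_dist E B < e \<longrightarrow> B \<in> {E \<in> Fn n X. E \<inter> U \<noteq> {}}"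
    using \<open>\<epsilon> > 0\<close> by blast
qed auto

lemma Fn_map_funpow: "(Fn_map f ^^ m) E = (f ^^ m) ` E"
  by (induction m) (auto simp: Fn_map_def image_comp)

lemma Z_transitive_Fn_iff:
  "Z_transitive (Fn_open n X) (Fn n X) (Fn_map f) \<longleftrightarrow>
     (\<forall>\<U> \<V>. Fn_open n X \<U> \<and> \<U> \<noteq> {} \<and> Fn_open n X \<V> \<and> \<V> \<noteq> {} \<longrightarrow>
        (\<exists>k. (\<exists>E\<in>\<U>. (f ^^ k) ` E \<in> \<V>) \<or> (\<exists>E\<in>\<V>. (f ^^ k) ` E \<in> \<U>)))"
proof -
  have Z_step: "(\<exists>k::int. if k \<ge> 0 then (Fn_map f ^^ nat k) ` \<U> \<inter> \<V> \<noteq> {}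
                   else {z\<in>Fn n X. (Fn_map f ^^ nat (-k)) z \<in> \<U>} \<inter> \<V> \<noteq> {})
      \<longleftrightarrow> (\<exists>k. (\<exists>E\<in>\<U>. (f ^^ k) ` E \<in> \<V>) \<or> (\<exists>E\<in>\<V>. (f ^^ k) ` E \<in> \<U>))"
    if "\<V> \<subseteq> Fn n X" for \<U> \<V>
  proof
    assume "\<exists>k::int. if k \<ge> 0 then (Fn_map f ^^ nat k) ` \<U> \<inter> \<V> \<noteq> {}
                   else {z\<in>Fn n X. (Fn_map f ^^ nat (-k)) z \<in> \<U>} \<inter> \<V> \<noteq> {}"
    then show "\<exists>k. (\<exists>E\<in>\<U>. (f ^^ k) ` E \<in> \<V>) \<or> (\<exists>E\<in>\<V>. (f ^^ k) ` E \<in> \<U>)"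
      by (auto simp: Fn_map_funpow split: if_splits)
  next
    assume "\<exists>k. (\<exists>E\<in>\<U>. (f ^^ k) ` E \<in> \<V>) \<or> (\<exists>E\<in>\<V>. (f ^^ k) ` E \<in> \<U>)"
    then obtain k where "(\<exists>E\<in>\<U>. (f ^^ k) ` E \<in> \<V>) \<or> (\<exists>E\<in>\<V>. (f ^^ k) ` E \<in> \<U>)"
      by blast
    then show "\<exists>k::int. if k \<ge> 0 then (Fn_map f ^^ nat k) ` \<U> \<inter> \<V> \<noteq> {}
                   else {z\<in>Fn n X. (Fn_map f ^^ nat (-k)) z \<in> \<U>} \<inter> \<V> \<noteq> {}"
    proof
      assume "\<exists>E\<in>\<U>. (f ^^ k) ` E \<in> \<V>"
      then show ?thesis
        by (intro exI[of _ "int k"]) (auto simp: Fn_map_funpow)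
    next
      assume "\<exists>E\<in>\<V>. (f ^^ k) ` E \<in> \<U>"
      then show ?thesis
        using that by (cases "k = 0") (auto intro!: exI[of _ "- int k"] simp: Fn_map_funpow)
    qed
  qed
  show ?thesis
    unfolding Z_transitive_def using Z_step by (auto simp: Fn_open_def)
qed

lemma finite_eq_image_lessThan:
  assumes "finite S" "S \<noteq> {}" "card S \<le> m"
  obtains g :: "nat \<Rightarrow> 'a" where "g ` {..<m} = S"
proof -
  obtain h where h: "bij_betw h {0..<card S} S"
    using ex_bij_betw_nat_finite[OF assms(1)] by blast
  define g where "g i = h (min i (card S - 1))" for i
  have "min i (card S - 1) < card S" for i
    using assms(1,2) by (simp add: card_gt_0_iff min.strict_coboundedI2)
  then have "g ` {..<m} \<subseteq> S"
    using h by (auto simp: g_def bij_betw_def)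
  moreover have "S \<subseteq> g ` {..<m}"
  proof
    fix s assume "s \<in> S"
    then obtain i where "i < card S" "s = h i"
      using h unfolding bij_betw_def by (metis atLeastLessThan_iff imageE)
    then show "s \<in> g ` {..<m}"
      using assms(3) by (auto simp: g_def intro!: image_eqI[of _ _ i])
  qed
  ultimately show thesis
    using that by blast
qed

definition hitting_times :: "('a \<Rightarrow> 'a) \<Rightarrow> 'a set \<Rightarrow> 'a set \<Rightarrow> nat set" where
  "hitting_times f U V = {m. (f ^^ m) ` U \<inter> V \<noteq> {}}"

lemma mem_hitting_times: "m \<in> hitting_times f U V \<longleftrightarrow> (\<exists>x\<in>U. (f ^^ m) x \<in> V)"
  unfolding hitting_times_def by blast

lemma mem_hitting_times_iff_vimage: "m \<in> hitting_times f U V \<longleftrightarrow> U \<inter> (f ^^ m) -` V \<noteq> {}"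
  unfolding hitting_times_def by blast

lemma zero_mem_hitting_times: "0 \<in> hitting_times f U V \<longleftrightarrow> U \<inter> V \<noteq> {}"
  unfolding hitting_times_def by simp

lemma hitting_times_mono:
  "U \<subseteq> U' \<Longrightarrow> V \<subseteq> V' \<Longrightarrow> hitting_times f U V \<subseteq> hitting_times f U' V'"
  unfolding hitting_times_def by blast

lemma hitting_times_Int_vimage:
  "hitting_times f (U \<inter> (f ^^ k) -` A) (V \<inter> (f ^^ k) -` B)
     \<subseteq> hitting_times f U V \<inter> hitting_times f A B"
proof
  fix m assume "m \<in> hitting_times f (U \<inter> (f ^^ k) -` A) (V \<inter> (f ^^ k) -` B)"
  then obtain x where x: "x \<in> U" "(f ^^ k) x \<in> A" "(f ^^ m) x \<in> V" "(f ^^ k) ((f ^^ m) x) \<in> B"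
    unfolding mem_hitting_times by auto
  have "(f ^^ m) ((f ^^ k) x) = (f ^^ k) ((f ^^ m) x)"
    by (metis add.commute comp_apply funpow_add)
  then have "m \<in> hitting_times f A B"
    using x unfolding mem_hitting_times by (intro bexI[of _ "(f ^^ k) x"]) auto
  moreover have "m \<in> hitting_times f U V"
    using x unfolding mem_hitting_times by blast
  ultimately show "m \<in> hitting_times f U V \<inter> hitting_times f A B"
    by blast
qed

definition nonempty_openin :: "'a::topological_space set \<Rightarrow> 'a set \<Rightarrow> bool" where
  "nonempty_openin X U \<longleftrightarrow> openin (top_of_set X) U \<and> U \<noteq> {}"

lemma weakly_mixing_iff_hitting_times:
  "weakly_mixing X f \<longleftrightarrow>
     (\<forall>U1 U2 V1 V2. nonempty_openin X U1 \<and> nonempty_openin X U2 \<and>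
        nonempty_openin X V1 \<and> nonempty_openin X V2 \<longrightarrow>
        (\<exists>k\<ge>1. k \<in> hitting_times f U1 V1 \<inter> hitting_times f U2 V2))"
  unfolding weakly_mixing_def nonempty_openin_def hitting_times_def by (simp add: conj_ac)

lemma weakly_mixing_singleton:
  assumes "f x = x"
  shows "weakly_mixing {x} f"
proof -
  have "U = {x}" if "nonempty_openin {x} U" for U
    using that openin_imp_subset unfolding nonempty_openin_def by blast
  moreover have "(f ^^ k) x = x" for k
    using assms by (induction k) auto
  ultimately have "1 \<in> hitting_times f U V" if "nonempty_openin {x} U" "nonempty_openin {x} V" for U V
    using that unfolding mem_hitting_times by (metis singletonI)
  then show ?thesis
    unfolding weakly_mixing_iff_hitting_times by blast
qed

lemma nonempty_openin_disjoint_subsets: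
  fixes X :: "'a::t2_space set"
  assumes perfect: "\<And>x. x \<in> X \<Longrightarrow> x islimpt X"
    and "nonempty_openin X A" "nonempty_openin X B"
  obtains A' B' where "nonempty_openin X A'" "nonempty_openin X B'" "A' \<subseteq> A" "B' \<subseteq> B" "A' \<inter> B' = {}"
proof -
  obtain b where "b \<in> B"
    using assms(3) unfolding nonempty_openin_def by blast
  obtain a T where "a \<in> A" "A = X \<inter> T" "open T"
    using assms(2) unfolding nonempty_openin_def openin_open by blast
  have "\<exists>a'\<in>A. a' \<noteq> b"
  proof (cases "a = b")
    case True
    then show ?thesis
      using perfect[of a] \<open>a \<in> A\<close> \<open>A = X \<inter> T\<close> \<open>open T\<close> unfolding islimpt_def by blast
  qed (use \<open>a \<in> A\<close> in blast)
  then obtain a' U V where "a' \<in> A" "open U" "open V" "a' \<in> U" "b \<in> V" "U \<inter> V = {}"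
    using separation_t2 by metis
  then show thesis
    using that[of "A \<inter> U" "B \<inter> V"] assms(2,3) \<open>b \<in> B\<close>
    unfolding nonempty_openin_def by (auto intro: openin_Int_open)
qed

locale dynamical_system =
  fixes X :: "'a::metric_space set" and f :: "'a \<Rightarrow> 'a"
  assumes continuous: "continuous_on X f" and maps_to: "f ` X \<subseteq> X"
begin

lemma funpow_in: "x \<in> X \<Longrightarrow> (f ^^ m) x \<in> X"
  by (induction m) (use maps_to in auto)

lemma continuous_on_funpow: "continuous_on X (f ^^ m)"
proof (induction m)
  case (Suc m)
  have "continuous_on X (\<lambda>x. f ((f ^^ m) x))"
    by (intro continuous_on_compose2[OF continuous Suc]) (auto intro: funpow_in)
  then show ?case
    by (simp add: o_def)
qed simp

lemma openin_Int_vimage: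
  assumes "openin (top_of_set X) U" "openin (top_of_set X) V"
  shows "openin (top_of_set X) (U \<inter> (f ^^ k) -` V)"
proof -
  have "openin (top_of_set X) (X \<inter> (f ^^ k) -` V)"
    using continuous_openin_preimage[OF continuous_on_funpow _ assms(2)] funpow_in by blast
  then have "openin (top_of_set X) (U \<inter> (X \<inter> (f ^^ k) -` V))"
    using assms(1) by (rule openin_Int[rotated])
  moreover have "U \<inter> (X \<inter> (f ^^ k) -` V) = U \<inter> (f ^^ k) -` V"
    using openin_imp_subset[OF assms(1)] by blast
  ultimately show ?thesis
    by simp
qed

lemma nonempty_openin_Int_vimage:
  assumes "nonempty_openin X U" "nonempty_openin X V" "k \<in> hitting_times f U V"
  shows "nonempty_openin X (U \<inter> (f ^^ k) -` V)"
  using assms openin_Int_vimage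
  unfolding nonempty_openin_def mem_hitting_times_iff_vimage by blast

lemma transitive_imp_transpose:
  assumes transitive: "\<And>U V. nonempty_openin X U \<Longrightarrow> nonempty_openin X V \<Longrightarrow>
      \<exists>m\<ge>1. m \<in> hitting_times f U V"
    and "nonempty_openin X U1" "nonempty_openin X U2" "nonempty_openin X V1" "nonempty_openin X V2"
    and "\<exists>k\<ge>1. k \<in> hitting_times f U1 V1 \<inter> hitting_times f U2 V2"
  shows "\<exists>k\<ge>1. k \<in> hitting_times f U1 U2 \<inter> hitting_times f V1 V2"
proof -
  obtain k where "k \<in> hitting_times f U1 V1" "k \<in> hitting_times f U2 V2"
    using assms(6) by blast
  then have "nonempty_openin X (U1 \<inter> (f ^^ k) -` V1)" "nonempty_openin X (U2 \<inter> (f ^^ k) -` V2)"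
    using assms(2-5) by (auto intro: nonempty_openin_Int_vimage)
  then obtain m where "m \<ge> 1" "m \<in> hitting_times f (U1 \<inter> (f ^^ k) -` V1) (U2 \<inter> (f ^^ k) -` V2)"
    using transitive by blast
  then show ?thesis
    using hitting_times_Int_vimage by blast
qed

lemma weakly_mixing_imp_common_hitting_time:
  assumes wm: "weakly_mixing X f" and "X \<noteq> {}" and "finite I"
    and UV: "\<And>i. i \<in> I \<Longrightarrow> nonempty_openin X (U i) \<and> nonempty_openin X (V i)"
  shows "\<exists>k. \<forall>i\<in>I. k \<in> hitting_times f (U i) (V i)"
proof -
  have "\<exists>A B. nonempty_openin X A \<and> nonempty_openin X B \<and>
      hitting_times f A B \<subseteq> (\<Inter>i\<in>I. hitting_times f (U i) (V i))"
    using \<open>finite I\<close> UV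
  proof (induction I rule: finite_induct)
    case empty
    then show ?case
      using \<open>X \<noteq> {}\<close> by (intro exI[of _ X]) (simp add: nonempty_openin_def)
  next
    case (insert j I)
    then obtain A B where AB: "nonempty_openin X A" "nonempty_openin X B"
      "hitting_times f A B \<subseteq> (\<Inter>i\<in>I. hitting_times f (U i) (V i))"
      by blast
    obtain k where "k \<in> hitting_times f (U j) A" "k \<in> hitting_times f (V j) B"
      using wm AB(1,2) insert.prems[of j] unfolding weakly_mixing_iff_hitting_times by blast
    then have "nonempty_openin X (U j \<inter> (f ^^ k) -` A)" "nonempty_openin X (V j \<inter> (f ^^ k) -` B)"
      using AB(1,2) insert.prems[of j] by (auto intro: nonempty_openin_Int_vimage)
    moreover have "hitting_times f (U j \<inter> (f ^^ k) -` A) (V j \<inter> (f ^^ k) -` B)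
        \<subseteq> (\<Inter>i\<in>insert j I. hitting_times f (U i) (V i))"
      using hitting_times_Int_vimage[of f "U j" k A "V j" B] AB(3) by blast
    ultimately show ?case
      by blast
  qed
  then obtain A B where "nonempty_openin X A" "nonempty_openin X B"
    "hitting_times f A B \<subseteq> (\<Inter>i\<in>I. hitting_times f (U i) (V i))"
    by blast
  moreover have "hitting_times f A B \<noteq> {}"
    using wm calculation(1,2) unfolding weakly_mixing_iff_hitting_times by blast
  ultimately show ?thesis
    by blast
qed

lemma weakly_mixing_imp_Fn_hitting:
  assumes wm: "weakly_mixing X f"
    and \<U>: "Fn_open n X \<U>" "E \<in> \<U>" and \<V>: "Fn_open n X \<V>" "D \<in> \<V>"
  shows "\<exists>k. \<exists>E'\<in>\<U>. (f ^^ k) ` E' \<in> \<V>"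
proof -
  obtain e1 where "e1 > 0" and e1: "\<And>B. B \<in> Fn n X \<Longrightarrow> hausdorff_dist E B < e1 \<Longrightarrow> B \<in> \<U>"
    using \<U> unfolding Fn_open_def by blast
  obtain e2 where "e2 > 0" and e2: "\<And>B. B \<in> Fn n X \<Longrightarrow> hausdorff_dist D B < e2 \<Longrightarrow> B \<in> \<V>"
    using \<V> unfolding Fn_open_def by blast
  define r where "r = min e1 e2 / 2"
  have "r > 0" "r < e1" "r < e2"
    using \<open>e1 > 0\<close> \<open>e2 > 0\<close> by (auto simp: r_def)
  have E: "E \<subseteq> X" "E \<noteq> {}" "finite E" "card E \<le> n" and D: "D \<subseteq> X" "D \<noteq> {}" "finite D" "card D \<le> n"
    using \<U> \<V> by (auto simp: Fn_open_def Fn_def)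
  \<comment> \<open>Indexing E and D by the same set pairs off their points, each point being used at least once.\<close>
  define m where "m = max (card E) (card D)"
  have "0 < m" "m \<le> n"
    using E D by (auto simp: m_def card_gt_0_iff)
  obtain g where g: "g ` {..<m} = E"
    using finite_eq_image_lessThan[OF E(3,2), of m] by (auto simp: m_def)
  obtain h where h: "h ` {..<m} = D"
    using finite_eq_image_lessThan[OF D(3,2), of m] by (auto simp: m_def)
  have "nonempty_openin X (X \<inter> ball p r)" if "p \<in> X" for p
    using that \<open>r > 0\<close> by (auto simp: nonempty_openin_def openin_open_Int)
  then have "\<exists>k. \<forall>j\<in>{..<m}. k \<in> hitting_times f (X \<inter> ball (g j) r) (X \<inter> ball (h j) r)"
    using E(1) D(1) g h
    by (intro weakly_mixing_imp_common_hitting_time[OF wm]) (use E(2) in auto)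
  then obtain k where "\<forall>j\<in>{..<m}. k \<in> hitting_times f (X \<inter> ball (g j) r) (X \<inter> ball (h j) r)"
    by blast
  then have "\<exists>y. y \<in> X \<and> dist (g j) y < r \<and> dist (h j) ((f ^^ k) y) < r" if "j < m" for j
    using that unfolding mem_hitting_times by (metis IntD1 IntD2 lessThan_iff mem_ball)
  then obtain x where x: "\<And>j. j < m \<Longrightarrow>
      x j \<in> X \<and> dist (g j) (x j) < r \<and> dist (h j) ((f ^^ k) (x j)) < r"
    by metis
  define E' where "E' = x ` {..<m}"
  have "E' \<in> Fn n X" "(f ^^ k) ` E' \<in> Fn n X"
    using x funpow_in \<open>0 < m\<close> \<open>m \<le> n\<close> unfolding E'_def image_comp by (auto intro!: image_in_Fn)
  moreover have "hausdorff_dist E E' \<le> r"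
    unfolding E'_def g[symmetric] using x \<open>0 < m\<close>
    by (intro hausdorff_dist_image_le) (auto intro: less_imp_le)
  moreover have "hausdorff_dist D ((f ^^ k) ` E') \<le> r"
    unfolding E'_def h[symmetric] image_comp using x \<open>0 < m\<close>
    by (intro hausdorff_dist_image_le) (auto intro: less_imp_le)
  ultimately have "E' \<in> \<U>" "(f ^^ k) ` E' \<in> \<V>"
    using e1 e2 \<open>r < e1\<close> \<open>r < e2\<close> by force+
  then show ?thesis
    by blast
qed

end

lemma Fn_Z_transitive_imp_triples:
  assumes Z: "Z_transitive (Fn_open n X) (Fn n X) (Fn_map f)" and "n \<ge> 2"
    and A: "nonempty_openin X A" and B: "nonempty_openin X B" and C: "nonempty_openin X C"
  shows "hitting_times f A B \<inter> hitting_times f A C \<noteq> {} \<or>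
    hitting_times f B A \<inter> hitting_times f C A \<noteq> {}"
proof -
  define \<U> where "\<U> = {E \<in> Fn n X. E \<subseteq> A}"
  define \<V> where "\<V> = {E \<in> Fn n X. E \<inter> B \<noteq> {}} \<inter> {E \<in> Fn n X. E \<inter> C \<noteq> {}}"
  have "Fn_open n X \<U>" "Fn_open n X \<V>"
    using A B C unfolding \<U>_def \<V>_def nonempty_openin_def
    by (auto intro: Fn_open_subsets Fn_open_meets Fn_open_Int)
  moreover obtain a b c where "a \<in> A" "b \<in> B" "c \<in> C"
    using A B C unfolding nonempty_openin_def by blast
  moreover have "A \<subseteq> X" "B \<subseteq> X" "C \<subseteq> X"
    using A B C unfolding nonempty_openin_def by (auto dest: openin_imp_subset)
  ultimately have "Fn_open n X \<U>" "Fn_open n X \<V>" "{a} \<in> \<U>" "{b, c} \<in> \<V>"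
    using \<open>n \<ge> 2\<close> by (auto simp: \<U>_def \<V>_def Fn_def card_insert_if)
  then obtain k where "(\<exists>E\<in>\<U>. (f ^^ k) ` E \<in> \<V>) \<or> (\<exists>E\<in>\<V>. (f ^^ k) ` E \<in> \<U>)"
    using Z unfolding Z_transitive_Fn_iff by blast
  then have "k \<in> hitting_times f A B \<inter> hitting_times f A C \<or>
      k \<in> hitting_times f B A \<inter> hitting_times f C A"
    unfolding \<U>_def \<V>_def hitting_times_def by blast
  then show ?thesis
    by blast
qed

text \<open>These hypotheses are what a nondegenerate continuum with Z-transitive \<open>F\<^sub>n(f)\<close> provides, by
  \<open>Fn_Z_transitive_imp_triples\<close>.\<close>

locale triple_transitive_system = dynamical_system +
  assumes compact: "compact X"
    and perfect: "\<And>x. x \<in> X \<Longrightarrow> x islimpt X"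
    and triple_transitive: "\<And>A B C. nonempty_openin X A \<Longrightarrow> nonempty_openin X B \<Longrightarrow>
      nonempty_openin X C \<Longrightarrow> hitting_times f A B \<inter> hitting_times f A C \<noteq> {} \<or>
        hitting_times f B A \<inter> hitting_times f C A \<noteq> {}"
begin

lemma image_eq: "f ` X = X"
proof (rule ccontr)
  assume "f ` X \<noteq> X"
  have "closedin (top_of_set X) (f ` X)"
    using compact_continuous_image[OF continuous compact] maps_to
    by (simp add: closed_subset compact_imp_closed)
  then have "nonempty_openin X (X - f ` X)"
    using openin_diff[OF openin_subtopology_self] \<open>f ` X \<noteq> X\<close> maps_to
    unfolding nonempty_openin_def by blast
  then obtain P Q where PQ: "nonempty_openin X P" "nonempty_openin X Q"
    "P \<subseteq> X - f ` X" "Q \<subseteq> X - f ` X" "P \<inter> Q = {}"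
    using nonempty_openin_disjoint_subsets[OF perfect] by metis
  have no_hit: "hitting_times f S T = {}" if "S \<subseteq> X" "T \<subseteq> X - f ` X" "S \<inter> T = {}" for S T
  proof (intro equals0I)
    fix m assume "m \<in> hitting_times f S T"
    then obtain x where "x \<in> S" "(f ^^ m) x \<in> T"
      unfolding mem_hitting_times by blast
    then show False
    proof (cases m)
      case (Suc j)
      then have "(f ^^ m) x \<in> f ` X"
        using funpow_in[of x j] \<open>x \<in> S\<close> that(1) by auto
      then show False
        using that(2) \<open>(f ^^ m) x \<in> T\<close> by blast
    qed (use that in auto)
  qed
  have "hitting_times f P Q = {}" "hitting_times f Q P = {}"
    by (rule no_hit; use PQ(3-5) in blast)+
  then show False
    using triple_transitive[OF PQ(1,2,2)] by blast
qed

lemma funpow_image_eq: "(f ^^ m) ` X = X"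
proof (induction m)
  case (Suc m)
  then show ?case
    by (metis funpow_Suc_right image_comp image_eq)
qed simp

lemma nonempty_openin_vimage:
  assumes "nonempty_openin X V"
  shows "nonempty_openin X (X \<inter> (f ^^ m) -` V)"
proof -
  have "V \<subseteq> (f ^^ m) ` X"
    using assms funpow_image_eq unfolding nonempty_openin_def by (auto dest: openin_imp_subset)
  then have "m \<in> hitting_times f X V"
    using assms unfolding nonempty_openin_def hitting_times_def by blast
  moreover have "nonempty_openin X X"
    using assms by (auto simp: nonempty_openin_def dest: openin_imp_subset)
  ultimately show ?thesis
    using assms nonempty_openin_Int_vimage by blast
qed

lemma topologically_transitive:
  assumes U: "nonempty_openin X U" and V: "nonempty_openin X V"
  shows "\<exists>m\<ge>1. m \<in> hitting_times f U V"
proof (rule ccontr)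
  assume not_hit: "\<not> ?thesis"
  \<comment> \<open>Then U never reaches the open set W of points that later enter V, and the triple property
    applied to \<open>W \<inter> f\<^sup>-\<^sup>s(U)\<close>, U and \<open>f\<^sup>-\<^sup>s(W)\<close> fails in both alternatives.\<close>
  define W where "W = (\<Union>k\<in>{1..}. X \<inter> (f ^^ k) -` V)"
  have "openin (top_of_set X) W"
    using V unfolding W_def nonempty_openin_def
    by (intro openin_Union) (auto intro: openin_Int_vimage)
  moreover have "X \<inter> (f ^^ 1) -` V \<subseteq> W"
    unfolding W_def by blast
  ultimately have W: "nonempty_openin X W"
    using nonempty_openin_vimage[OF V, of 1] unfolding nonempty_openin_def by blast
  have never_W: "hitting_times f U W = {}"
  proof (intro equals0I)
    fix m assume "m \<in> hitting_times f U W"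
    then obtain x j where "x \<in> U" "j \<ge> 1" "(f ^^ j) ((f ^^ m) x) \<in> V"
      unfolding W_def mem_hitting_times by auto
    then have "j + m \<in> hitting_times f U V"
      unfolding mem_hitting_times by (auto simp: funpow_add)
    then show False
      using not_hit \<open>j \<ge> 1\<close> by auto
  qed
  then obtain s where s: "s \<in> hitting_times f W U"
    using triple_transitive[OF W U U] by blast
  have "hitting_times f (W \<inter> (f ^^ s) -` U) (X \<inter> (f ^^ s) -` W) = {}"
    using hitting_times_Int_vimage[of f W s U X W] never_W by blast
  moreover have "hitting_times f U (W \<inter> (f ^^ s) -` U) = {}"
    using hitting_times_mono[of U U "W \<inter> (f ^^ s) -` U" W f] never_W by blast
  ultimately show False
    using triple_transitive[OF nonempty_openin_Int_vimage[OF W U s] U nonempty_openin_vimage[OF W]]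
    by blast
qed

lemma hitting_times_alternative:
  assumes U1: "nonempty_openin X U1" and U2: "nonempty_openin X U2"
    and V1: "nonempty_openin X V1" and V2: "nonempty_openin X V2" and "U1 \<inter> V1 = {}"
  shows "(\<exists>k\<ge>1. k \<in> hitting_times f U1 V1 \<inter> hitting_times f U2 V2) \<or>
    (\<exists>k\<ge>1. k \<in> hitting_times f V1 U1 \<inter> hitting_times f V2 U2)"
proof -
  obtain s where s: "s \<in> hitting_times f U1 U2"
    using topologically_transitive[OF U1 U2] by blast
  define A where "A = U1 \<inter> (f ^^ s) -` U2"
  define C where "C = X \<inter> (f ^^ s) -` V2"
  have "A \<subseteq> U1"
    by (auto simp: A_def)
  then have "0 \<notin> hitting_times f A V1" "0 \<notin> hitting_times f V1 A"
    using \<open>U1 \<inter> V1 = {}\<close> by (auto simp: zero_mem_hitting_times)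
  moreover have "hitting_times f A V1 \<subseteq> hitting_times f U1 V1"
    "hitting_times f V1 A \<subseteq> hitting_times f V1 U1"
    using hitting_times_mono[OF \<open>A \<subseteq> U1\<close> subset_refl] hitting_times_mono[OF subset_refl \<open>A \<subseteq> U1\<close>]
    by auto
  moreover have "hitting_times f A C \<subseteq> hitting_times f U2 V2"
    "hitting_times f C A \<subseteq> hitting_times f V2 U2"
    using hitting_times_Int_vimage[of f U1 s U2 X V2] hitting_times_Int_vimage[of f X s V2 U1 U2]
    by (auto simp: A_def C_def Int_commute)
  moreover have "hitting_times f A V1 \<inter> hitting_times f A C \<noteq> {} \<or>
      hitting_times f V1 A \<inter> hitting_times f C A \<noteq> {}"
    using triple_transitive nonempty_openin_Int_vimage[OF U1 U2 s] V1 nonempty_openin_vimage[OF V2]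
    by (simp add: A_def C_def)
  ultimately show ?thesis
    by (force simp: Suc_le_eq)
qed

lemma transpose:
  assumes "nonempty_openin X U1" "nonempty_openin X U2" "nonempty_openin X V1" "nonempty_openin X V2"
    and "\<exists>k\<ge>1. k \<in> hitting_times f U1 V1 \<inter> hitting_times f U2 V2"
  shows "\<exists>k\<ge>1. k \<in> hitting_times f U1 U2 \<inter> hitting_times f V1 V2"
  using transitive_imp_transpose[OF _ assms] topologically_transitive by blast

theorem weakly_mixing: "weakly_mixing X f"
  unfolding weakly_mixing_iff_hitting_times
proof (intro allI impI, elim conjE)
  fix U1 U2 V1 V2
  assume U1: "nonempty_openin X U1" and U2: "nonempty_openin X U2"
    and V1: "nonempty_openin X V1" and V2: "nonempty_openin X V2"
  obtain A B where A: "nonempty_openin X A" "A \<subseteq> U1" and B: "nonempty_openin X B" "B \<subseteq> V1"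
    and "A \<inter> B = {}"
    using nonempty_openin_disjoint_subsets[OF perfect U1 V1] by metis
  have "\<exists>k\<ge>1. k \<in> hitting_times f A B \<inter> hitting_times f U2 V2"
    if "\<exists>k\<ge>1. k \<in> hitting_times f B A \<inter> hitting_times f V2 U2"
  proof -
    have "\<exists>k\<ge>1. k \<in> hitting_times f A U2 \<inter> hitting_times f B V2"
      using transpose[OF B(1) V2 A(1) U2 that] by (simp add: Int_commute)
    then show ?thesis
      by (rule transpose[OF A(1) B(1) U2 V2])
  qed
  then have "\<exists>k\<ge>1. k \<in> hitting_times f A B \<inter> hitting_times f U2 V2"
    using hitting_times_alternative[OF A(1) U2 B(1) V2 \<open>A \<inter> B = {}\<close>] by blast
  then show "\<exists>k\<ge>1. k \<in> hitting_times f U1 V1 \<inter> hitting_times f U2 V2"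
    using hitting_times_mono[OF A(2) B(2)] by blast
qed

end

theorem theorem5:
  fixes X :: "'a::metric_space set" and f :: "'a \<Rightarrow> 'a" and n :: nat
  assumes "continuum X" and "n \<ge> 2"
    and "continuous_on X f" and "f ` X \<subseteq> X"
  shows "Z_transitive (Fn_open n X) (Fn n X) (Fn_map f) \<longleftrightarrow> weakly_mixing X f"
proof
  assume Z: "Z_transitive (Fn_open n X) (Fn n X) (Fn_map f)"
  show "weakly_mixing X f"
  proof (cases "\<exists>x. X = {x}")
    case True
    then show ?thesis
      using \<open>f ` X \<subseteq> X\<close> weakly_mixing_singleton by auto
  next
    case False
    interpret triple_transitive_system X f
    proof unfold_locales
      show "continuous_on X f" "f ` X \<subseteq> X" "compact X"
        using assms by (auto simp: continuum_def)
      show "x islimpt X" if "x \<in> X" for x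
        using assms(1) False that by (intro connected_imp_perfect) (auto simp: continuum_def)
    qed (rule Fn_Z_transitive_imp_triples[OF Z \<open>n \<ge> 2\<close>])
    show ?thesis
      by (rule weakly_mixing)
  qed
next
  assume "weakly_mixing X f"
  then show "Z_transitive (Fn_open n X) (Fn n X) (Fn_map f)"
    unfolding Z_transitive_Fn_iff
    using dynamical_system.weakly_mixing_imp_Fn_hitting[OF dynamical_system.intro[OF assms(3,4)]]
    by (metis ex_in_conv)
qed

end
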